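(* Let $t\ge2$, let $\kappa$ be a $t$-core with $n$-vector $(n_0,n_1,\dots,n_{t-1})$, and let $a\in\{0,1\}$. If $t\equiv 1+2a\pmod4$, then \[ \mathrm{srank}(\kappa)\equiv\sum_{i=0}^{t-1}\bigl(n_i+(1-2a)i+a\bigr)^3\pmod4; \] and if $t\equiv 2a\pmod 4$, then \[ \mathrm{srank}(\kappa)\equiv\sum_{i=0}^{t-1}\bigl(a n_i^2+(i^2+i)n_i\bigr)\pmod4. \]
   Context: For a partition $\pi$, $\pi'$ is its conjugate, $\mathcal O(\pi)$ the number of odd parts, and $\mathrm{srank}(\pi)=\mathcal O(\pi)-\mathcal O(\pi')$. A $t$-core is a partition with no rim hook (border strip) of length $t$. In the Young diagram, the cell in row $a'$ and column $b'$ is labelled by the residue of $b'-a'$ modulo $t$. For a $t$-core $\kappa$, let $r_i$ ($0\le i\le t-1$) be the number of cells of $\kappa$ labelled $i$; its $n$-vector is $(n_0,\dots,n_{t-1})=(r_0-r_1,r_1-r_2,\dots,r_{t-2}-r_{t-1},r_{t-1}-r_0)$. *)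

theory Defs
  imports Main
begin

definition is_partition :: "nat list \<Rightarrow> bool" where
  "is_partition ps \<longleftrightarrow> sorted_wrt (\<ge>) ps \<and> (\<forall>p\<in>set ps. 0 < p)"

text \<open>Young diagram: cell (i,j) (0-indexed row i, column j) belongs to the diagram iff j < part i.
  Residue b'-a' with 1-indexed rows/columns equals j-i.\<close>
definition cells :: "nat list \<Rightarrow> (nat \<times> nat) set" where
  "cells ps = {(i, j). i < length ps \<and> j < ps ! i}"

definition conj_part :: "nat list \<Rightarrow> nat list" where
  "conj_part ps = map (\<lambda>j. length (filter (\<lambda>p. j < p) ps)) [0..<(if ps = [] then 0 else hd ps)]"

definition num_odd :: "nat list \<Rightarrow> nat" where
  "num_odd ps = length (filter odd ps)"

definition srank :: "nat list \<Rightarrow> int" where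
  "srank ps = int (num_odd ps) - int (num_odd (conj_part ps))"

definition cell_adj :: "nat \<times> nat \<Rightarrow> nat \<times> nat \<Rightarrow> bool" where
  "cell_adj x y \<longleftrightarrow> \<bar>int (fst x) - int (fst y)\<bar> + \<bar>int (snd x) - int (snd y)\<bar> = 1"

definition cells_connected :: "(nat \<times> nat) set \<Rightarrow> bool" where
  "cells_connected S \<longleftrightarrow>
     (\<forall>x\<in>S. \<forall>y\<in>S. (x, y) \<in> {(u, v). u \<in> S \<and> v \<in> S \<and> cell_adj u v}\<^sup>*)"

definition no_2x2 :: "(nat \<times> nat) set \<Rightarrow> bool" where
  "no_2x2 S \<longleftrightarrow> \<not> (\<exists>i j. (i, j) \<in> S \<and> (Suc i, j) \<in> S \<and> (i, Suc j) \<in> S \<and> (Suc i, Suc j) \<in> S)"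

definition rim_hook :: "nat list \<Rightarrow> (nat \<times> nat) set \<Rightarrow> bool" where
  "rim_hook ps S \<longleftrightarrow> S \<noteq> {} \<and> S \<subseteq> cells ps \<and>
     (\<exists>mu. is_partition mu \<and> cells mu = cells ps - S) \<and>
     cells_connected S \<and> no_2x2 S"

definition is_core :: "nat \<Rightarrow> nat list \<Rightarrow> bool" where
  "is_core t ps \<longleftrightarrow> is_partition ps \<and> \<not> (\<exists>S. rim_hook ps S \<and> card S = t)"

definition res_count :: "nat \<Rightarrow> nat list \<Rightarrow> nat \<Rightarrow> nat" where
  "res_count t ps i = card {(a, b) \<in> cells ps. (int b - int a) mod int t = int i}"

definition nvec :: "nat \<Rightarrow> nat list \<Rightarrow> nat \<Rightarrow> int" where
  "nvec t ps i = int (res_count t ps i) - int (res_count t ps ((i + 1) mod t))"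

end

theory Submission
  imports Defs "HOL-Number_Theory.Cong"
begin

text \<open>
  Encode \<kappa> by its beta-numbers \<kappa>_i - i - 1, read as beads on an abacus with t runners.
  As \<kappa> has no rim hook of length t, every bead can be pushed t positions down, so the
  beads on the runner of residue \<rho> are exactly the positions \<rho> + t q with q < L_\<rho>.
  A content sum \<Sum> f (j - i) over the cells telescopes row by row into a sum, over the beads,
  of an antiderivative G of f, and then runner by runner into \<Sum>_\<rho> H_\<rho> L_\<rho> - H_\<rho> 0, where
  H_\<rho> is an antiderivative of q \<mapsto> G (\<rho> + t q). Residue counts show that L is the
  n-vector. Finally srank \<kappa> \<equiv> 2 \<Sum> (j - i) (mod 4) since (-1)^n \<equiv> 1 + 2 n, and for
  G y = y^2 + y the antiderivatives H_\<rho> can be chosen modulo 4 as the cubic or quadratic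
  polynomials of the statement, according to t mod 4.
\<close>

section \<open>Beta-numbers\<close>

definition part :: "nat list \<Rightarrow> nat \<Rightarrow> nat" where
  "part ps i = (if i < length ps then ps ! i else 0)"

text \<open>Bead positions, normalised so that the beads of the empty partition are the negative
  integers.\<close>

definition beta :: "nat list \<Rightarrow> nat \<Rightarrow> int" where
  "beta ps i = int (part ps i) - int i - 1"

lemma part_antimono:
  assumes "is_partition ps" and "i \<le> j"
  shows "part ps j \<le> part ps i"
proof (cases "i < j \<and> j < length ps")
  case True
  with assms(1) show ?thesis
    unfolding is_partition_def part_def by (auto simp: sorted_wrt_iff_nth_less)
qed (use assms(2) in \<open>auto simp: part_def\<close>)

lemma cells_eq_part: "cells ps = {(i, j). j < part ps i}"
  unfolding cells_def part_def by (auto split: if_splits)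

lemma cells_eq_Sigma_part:
  "length ps \<le> M \<Longrightarrow> cells ps = Sigma {..<M} (\<lambda>i. {..<part ps i})"
  unfolding cells_def part_def by (auto split: if_splits)

lemma finite_cells [simp]: "finite (cells ps)"
  by (simp add: cells_eq_Sigma_part[of ps "length ps"])

lemma beta_strict_antimono: "is_partition ps \<Longrightarrow> i < j \<Longrightarrow> beta ps j < beta ps i"
  using part_antimono[of ps i j] by (simp add: beta_def)

lemma inj_beta: "is_partition ps \<Longrightarrow> inj (beta ps)"
  by (metis beta_strict_antimono injI less_irrefl nat_neq_iff)

lemma beta_ge: "- int i - 1 \<le> beta ps i"
  by (simp add: beta_def)

lemma beta_beyond_length: "length ps \<le> i \<Longrightarrow> beta ps i = - int i - 1"
  by (simp add: beta_def part_def)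

lemma beta_Nil: "beta [] i = - int i - 1"
  by (simp add: beta_beyond_length)

lemma in_range_beta_below: "y < - int (length ps) \<Longrightarrow> y \<in> range (beta ps)"
  by (rule range_eqI[of _ _ "nat (- y - 1)"]) (simp add: beta_beyond_length)

lemma range_beta_Nil: "range (beta []) = {..<0}"
  using in_range_beta_below[of _ "[]"] by (auto simp: beta_Nil)

section \<open>Removing a rim hook moves a bead\<close>

lemma partition_of_antimono:
  fixes f :: "nat \<Rightarrow> nat"
  assumes anti: "\<And>r. f (Suc r) \<le> f r" and zero: "\<And>r. N \<le> r \<Longrightarrow> f r = 0"
  shows "\<exists>mu. is_partition mu \<and> cells mu = {(r, j). j < f r}"
proof -
  define k where "k = (LEAST r. f r = 0)"
  have f_k: "f k = 0" unfolding k_def by (rule LeastI[of _ N]) (simp add: zero)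
  have f_pos: "r < k \<Longrightarrow> f r \<noteq> 0" for r unfolding k_def using not_less_Least by blast
  have f_anti: "r \<le> r' \<Longrightarrow> f r' \<le> f r" for r r'
    using lift_Suc_antimono_le[of f r r'] anti by blast
  have "is_partition (map f [0..<k])"
    unfolding is_partition_def using f_anti f_pos by (auto simp: sorted_wrt_iff_nth_less)
  moreover have "r < k" if "j < f r" for r j
    using f_anti[of k r] f_k that by (cases "r < k") auto
  then have "cells (map f [0..<k]) = {(r, j). j < f r}"
    unfolding cells_def by auto
  ultimately show ?thesis by blast
qed

text \<open>Row c - 1 extends beyond column e and row c does not, so e - c is a free position
  between the beads of rows c and c - 1. Removing the rim hook that runs from row a to column e
  of row c - 1 moves the bead of row a to that position.\<close>

locale beta_gap =
  fixes ps :: "nat list" and a c e :: nat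
  assumes partition: "is_partition ps" and a_less_c: "a < c"
    and part_c_le: "part ps c \<le> e" and less_part: "e < part ps (c - 1)"
begin

definition hook_start :: "nat \<Rightarrow> nat" where
  "hook_start r = (if Suc r < c then part ps (Suc r) - 1 else e)"

definition hook :: "(nat \<times> nat) set" where
  "hook = Sigma {a..<c} (\<lambda>r. {hook_start r..<part ps r})"

lemma e_less_part: "r < c \<Longrightarrow> e < part ps r"
  using part_antimono[OF partition, of r "c - 1"] less_part by (simp add: less_le_trans)

lemma hook_start_less_part: "r < c \<Longrightarrow> hook_start r < part ps r"
  using e_less_part[of "Suc r"] e_less_part[of r] part_antimono[OF partition, of r "Suc r"]
  by (auto simp: hook_start_def)

lemma hook_subset_cells: "hook \<subseteq> cells ps"
  unfolding hook_def cells_eq_part by auto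

lemma partition_diff_hook: "\<exists>mu. is_partition mu \<and> cells mu = cells ps - hook"
proof -
  define f where "f r = (if a \<le> r \<and> r < c then hook_start r else part ps r)" for r
  have "f (Suc r) \<le> f r" for r
  proof -
    consider "Suc r < a" | "Suc r = a" | "a \<le> r" "Suc r < c" | "a \<le> r" "Suc r = c" | "c \<le> r"
      using a_less_c by linarith
    then show ?thesis
    proof cases
      case 2
      then show ?thesis
        using part_antimono[OF partition, of r "Suc r"] hook_start_less_part[of "Suc r"] a_less_c
        by (simp add: f_def)
    next
      case 3
      then show ?thesis using hook_start_less_part[of "Suc r"] by (simp add: f_def hook_start_def)
    next
      case 4
      then show ?thesis using part_c_le by (simp add: f_def hook_start_def)
    qed (use part_antimono[OF partition, of r "Suc r"] in \<open>auto simp: f_def\<close>)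
  qed
  moreover have "length ps \<le> r \<Longrightarrow> f r = 0" for r
    using e_less_part[of r] by (auto simp: f_def part_def)
  moreover have "{(r, j). j < f r} = cells ps - hook"
    by (auto simp: f_def hook_def cells_eq_part split: if_splits
        intro: less_trans[OF _ hook_start_less_part])
  ultimately show ?thesis using partition_of_antimono[of f] by metis
qed


lemma card_hook: "int (card hook) = beta ps a - (int e - int c)"
proof -
  define \<psi> where "\<psi> r = (if r < c then beta ps r else int e - int c)" for r
  have row: "int (part ps r - hook_start r) = \<psi> r - \<psi> (Suc r)" if "r < c" for r
    using that hook_start_less_part[of r] e_less_part[of "Suc r"]
    by (cases "Suc r < c") (auto simp: \<psi>_def hook_start_def beta_def of_nat_diff)
  have "int (card hook) = (\<Sum>r = a..<c. int (part ps r - hook_start r))"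
    by (simp add: hook_def card_SigmaI)
  also have "\<dots> = - (\<Sum>r = a..<c. \<psi> (Suc r) - \<psi> r)"
    by (simp add: row flip: sum_negf)
  also have "\<dots> = \<psi> a - \<psi> c"
    using a_less_c by (simp add: sum_Suc_diff')
  finally show ?thesis
    using a_less_c by (simp add: \<psi>_def)
qed

lemma hook_no_2x2: "no_2x2 hook"
  unfolding no_2x2_def
proof clarify
  fix i j assume "(i, j) \<in> hook" "(Suc i, Suc j) \<in> hook"
  then show False by (auto simp: hook_def hook_start_def split: if_splits)
qed

definition hook_adj :: "((nat \<times> nat) \<times> (nat \<times> nat)) set" where
  "hook_adj = {(u, v). u \<in> hook \<and> v \<in> hook \<and> cell_adj u v}"

lemma hook_path_to_corner:
  assumes "u \<in> hook"
  shows "(u, (c - 1, e)) \<in> hook_adj\<^sup>*"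
proof -
  have along_row: "((r, j), (r, hook_start r)) \<in> hook_adj\<^sup>*"
    if "a \<le> r" "r < c" "hook_start r \<le> j" "j < part ps r" for r j
    using that(3,4)
  proof (induction j rule: dec_induct)
    case (step j)
    then have "((r, Suc j), (r, j)) \<in> hook_adj"
      using that(1,2) by (auto simp: hook_adj_def hook_def cell_adj_def)
    with step show ?case by (meson converse_rtrancl_into_rtrancl Suc_lessD)
  qed simp
  have down_rows: "((r, hook_start r), (c - 1, e)) \<in> hook_adj\<^sup>*" if "a \<le> r" "r < c" for r
    using that
  proof (induction "c - 1 - r" arbitrary: r)
    case 0
    then have "r = c - 1" by simp
    then show ?case using a_less_c by (simp add: hook_start_def)
  next
    case (Suc d)
    then have r: "Suc r < c" "hook_start r = part ps (Suc r) - 1" by (auto simp: hook_start_def)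
    have "((r, hook_start r), (Suc r, hook_start r)) \<in> hook_adj"
      using Suc.prems r hook_start_less_part[of r] hook_start_less_part[of "Suc r"]
      by (auto simp: hook_adj_def hook_def cell_adj_def)
    moreover have "((Suc r, hook_start r), (Suc r, hook_start (Suc r))) \<in> hook_adj\<^sup>*"
      using Suc.prems r hook_start_less_part[of "Suc r"] by (intro along_row) auto
    moreover have "((Suc r, hook_start (Suc r)), (c - 1, e)) \<in> hook_adj\<^sup>*"
      using Suc.hyps(1)[of "Suc r"] Suc.hyps(2) Suc.prems r by simp
    ultimately show ?case by (meson converse_rtrancl_into_rtrancl rtrancl_trans)
  qed
  obtain r j where "u = (r, j)" "a \<le> r" "r < c" "hook_start r \<le> j" "j < part ps r"
    using assms by (auto simp: hook_def)
  then show ?thesis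
    using along_row down_rows by (meson rtrancl_trans)
qed

lemma hook_connected: "cells_connected hook"
proof -
  have "hook_adj\<inverse> = hook_adj"
    by (auto simp: hook_adj_def cell_adj_def)
  then have "((c - 1, e), v) \<in> hook_adj\<^sup>*" if "v \<in> hook" for v
    using rtrancl_converseI[OF hook_path_to_corner[OF that]] by simp
  then have "(u, v) \<in> hook_adj\<^sup>*" if "u \<in> hook" "v \<in> hook" for u v
    using hook_path_to_corner[OF that(1)] that(2) by (meson rtrancl_trans)
  then show ?thesis
    unfolding cells_connected_def hook_adj_def by blast
qed

lemma rim_hook: "rim_hook ps hook"
proof -
  have "(c - 1, e) \<in> hook"
    using a_less_c less_part by (simp add: hook_def hook_start_def)
  then have "hook \<noteq> {}" by blast
  with hook_subset_cells partition_diff_hook hook_connected hook_no_2x2 show ?thesis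
    unfolding rim_hook_def by simp
qed

end

text \<open>If the position t below a bead were free, the hook of \<open>beta_gap\<close> moving the bead
  there would be a rim hook of length t.\<close>

lemma core_beta_minus_in_range:
  assumes core: "is_core t ps" and t: "0 < t"
  shows "beta ps a - int t \<in> range (beta ps)"
proof (rule ccontr)
  assume not_bead: "beta ps a - int t \<notin> range (beta ps)"
  define y where "y = beta ps a - int t"
  have gap: "beta ps k \<noteq> y" for k
    using not_bead unfolding y_def by (metis rangeI)
  have partition: "is_partition ps"
    using core by (simp add: is_core_def)
  have "- int (length ps) \<le> y"
  proof (rule ccontr)
    assume "\<not> - int (length ps) \<le> y"
    then have "y \<in> range (beta ps)" by (intro in_range_beta_below) simp
    with gap show False by blast
  qed
  then have "beta ps (length ps) < y"
    by (simp add: beta_beyond_length)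
  define c where "c = (LEAST k. beta ps k < y)"
  have beta_c: "beta ps c < y"
    unfolding c_def by (rule LeastI) fact
  have above: "y < beta ps k" if "k < c" for k
    using not_less_Least[OF that[unfolded c_def]] gap[of k] by linarith
  have "a < c"
  proof (rule ccontr)
    assume "\<not> a < c"
    then have "beta ps a \<le> beta ps c"
      using beta_strict_antimono[OF partition, of c a] by (cases "a = c") auto
    with beta_c t show False by (simp add: y_def)
  qed
  define e where "e = nat (y + int c)"
  have "int (part ps c) \<le> y + int c"
    using beta_c by (simp add: beta_def)
  moreover have "y + int c < int (part ps (c - 1))"
    using above[of "c - 1"] \<open>a < c\<close> by (simp add: beta_def of_nat_diff)
  ultimately have e: "part ps c \<le> e" "e < part ps (c - 1)" and "int e = y + int c"
    unfolding e_def by linarith+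
  interpret beta_gap ps a c e
    using partition \<open>a < c\<close> e by unfold_locales
  have "card hook = t"
    using card_hook \<open>int e = y + int c\<close> by (simp add: y_def)
  with rim_hook core show False
    unfolding is_core_def by blast
qed

section \<open>The abacus of a t-core\<close>

lemma int_downset_eq_lessThan:
  fixes Q :: "int set"
  assumes "q\<^sub>0 \<in> Q" and down: "\<And>q. q \<in> Q \<Longrightarrow> q - 1 \<in> Q"
    and bound: "\<And>q. q \<in> Q \<Longrightarrow> q \<le> b"
  shows "\<exists>L. Q = {..<L}"
proof -
  have below: "q \<in> Q" if "q \<le> q'" "q' \<in> Q" for q q'
    using that by (induction q rule: int_le_induct) (auto intro: down)
  have "q\<^sub>0 + int (nat (b - q\<^sub>0) + 1) \<notin> Q"
    using bound[of "q\<^sub>0 + int (nat (b - q\<^sub>0) + 1)"] by linarith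
  define n where "n = (LEAST n. q\<^sub>0 + int n \<notin> Q)"
  have "q\<^sub>0 + int n \<notin> Q"
    unfolding n_def by (rule LeastI) fact
  moreover have "q\<^sub>0 + int k \<in> Q" if "k < n" for k
    using not_less_Least[OF that[unfolded n_def]] by blast
  ultimately have "Q = {..<q\<^sub>0 + int n}"
  proof (intro set_eqI iffI)
    fix q assume "q \<in> Q"
    show "q \<in> {..<q\<^sub>0 + int n}"
    proof (rule ccontr)
      assume "q \<notin> {..<q\<^sub>0 + int n}"
      then have "q\<^sub>0 + int n \<le> q" by simp
      then have "q\<^sub>0 + int n \<in> Q"
        using below \<open>q \<in> Q\<close> by blast
      with \<open>q\<^sub>0 + int n \<notin> Q\<close> show False by contradiction
    qed
  next
    fix q assume "q \<in> {..<q\<^sub>0 + int n}"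
    show "q \<in> Q"
    proof (cases "q \<le> q\<^sub>0")
      case True
      then show ?thesis using below \<open>q\<^sub>0 \<in> Q\<close> by blast
    next
      case False
      then have "nat (q - q\<^sub>0) < n" and "q = q\<^sub>0 + int (nat (q - q\<^sub>0))"
        using \<open>q \<in> {..<q\<^sub>0 + int n}\<close> by auto
      with \<open>\<And>k. k < n \<Longrightarrow> q\<^sub>0 + int k \<in> Q\<close> show ?thesis by metis
    qed
  qed
  then show ?thesis ..
qed

lemma mult_le_add_mult_iff:
  fixes k q :: int
  assumes "\<rho> < t"
  shows "int t * k \<le> int \<rho> + int t * q \<longleftrightarrow> k \<le> q"
proof
  assume "int t * k \<le> int \<rho> + int t * q"
  then have "int t * k < int t * (q + 1)"
    using assms by (simp add: algebra_simps)
  then show "k \<le> q"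
    by (simp add: mult_less_cancel_left)
next
  assume "k \<le> q"
  then show "int t * k \<le> int \<rho> + int t * q"
    by (simp add: add_increasing mult_left_mono)
qed

lemma core_runner_eq_lessThan:
  assumes core: "is_core t ps" and t: "0 < t"
  shows "\<exists>L. {q. y + int t * q \<in> range (beta ps)} = {..<L}"
proof (rule int_downset_eq_lessThan)
  have partition: "is_partition ps"
    using core by (simp add: is_core_def)
  define q\<^sub>0 where "q\<^sub>0 = - int (length ps) - \<bar>y\<bar> - 1"
  have "q\<^sub>0 \<le> 0"
    by (simp add: q\<^sub>0_def)
  then have "y + int t * q\<^sub>0 \<le> y + q\<^sub>0"
    using t mult_right_mono_neg[of 1 "int t" q\<^sub>0] by simp
  then show "q\<^sub>0 \<in> {q. y + int t * q \<in> range (beta ps)}"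
    by (auto simp: q\<^sub>0_def intro: in_range_beta_below)
  show "q - 1 \<in> {q. y + int t * q \<in> range (beta ps)}"
    if q: "q \<in> {q. y + int t * q \<in> range (beta ps)}" for q
  proof -
    obtain i where "beta ps i = y + int t * q"
      using q by auto
    then have "y + int t * (q - 1) = beta ps i - int t"
      by (simp add: algebra_simps)
    then show ?thesis
      using core_beta_minus_in_range[OF core t, of i] by simp
  qed
  show "q \<le> \<bar>beta ps 0 - y\<bar>" if q: "q \<in> {q. y + int t * q \<in> range (beta ps)}" for q
  proof -
    obtain i where "beta ps i = y + int t * q"
      using q by auto
    moreover have "beta ps i \<le> beta ps 0"
      using beta_strict_antimono[OF partition, of 0 i] by (cases i) auto
    moreover have "q \<le> int t * q" if "0 < q"
      using t that by simp
    ultimately show ?thesis by (smt (verit))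
  qed
qed

text \<open>For a t-core the beads on runner \<rho> are exactly the positions \<rho> + t q with
  q < charge t ps \<rho>; for other partitions the value is unspecified.\<close>

definition charge :: "nat \<Rightarrow> nat list \<Rightarrow> nat \<Rightarrow> int" where
  "charge t ps \<rho> = (THE L. {q. int \<rho> + int t * q \<in> range (beta ps)} = {..<L})"

lemma runner_eq_lessThan_charge:
  assumes "is_core t ps" and "0 < t"
  shows "{q. int \<rho> + int t * q \<in> range (beta ps)} = {..<charge t ps \<rho>}"
proof -
  obtain L where L: "{q. int \<rho> + int t * q \<in> range (beta ps)} = {..<L}"
    using core_runner_eq_lessThan[OF assms] by blast
  then have "charge t ps \<rho> = L"
    unfolding charge_def by (rule the_equality) (use L in auto)
  with L show ?thesis by simp
qed

lemma sum_int_by_residue: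
  fixes Y :: "int set" and G :: "int \<Rightarrow> 'a::comm_monoid_add"
  assumes "finite Y" and "0 < t"
  shows "sum G Y = (\<Sum>\<rho><t. \<Sum>q | int \<rho> + int t * q \<in> Y. G (int \<rho> + int t * q))"
proof -
  have "finite {q. int \<rho> + int t * q \<in> Y}" for \<rho>
    using finite_vimageI[OF assms(1), of "\<lambda>q. int \<rho> + int t * q"] assms(2)
    by (simp add: vimage_def inj_def)
  then have "(\<Sum>\<rho><t. \<Sum>q | int \<rho> + int t * q \<in> Y. G (int \<rho> + int t * q))
      = (\<Sum>(\<rho>, q) \<in> (SIGMA \<rho>:{..<t}. {q. int \<rho> + int t * q \<in> Y}). G (int \<rho> + int t * q))"
    by (simp add: sum.Sigma)
  also have "\<dots> = sum G Y"
  proof (rule sum.reindex_bij_witness[where i = "\<lambda>y. (nat (y mod int t), y div int t)"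
        and j = "\<lambda>(\<rho>, q). int \<rho> + int t * q"])
    show "(nat (y mod int t), y div int t) \<in> (SIGMA \<rho>:{..<t}. {q. int \<rho> + int t * q \<in> Y})"
      if "y \<in> Y" for y
      using that assms(2) by (simp add: nat_less_iff)
  qed (use assms(2) in auto)
  finally show ?thesis ..
qed

lemma beta_image_lessThan:
  assumes "is_partition ps" and "length ps \<le> M"
  shows "beta ps ` {..<M} = {y \<in> range (beta ps). - int M \<le> y}"
proof (intro set_eqI iffI)
  fix y assume "y \<in> {y \<in> range (beta ps). - int M \<le> y}"
  then obtain i where "y = beta ps i" "- int M \<le> y" by auto
  moreover have "i < M"
    using calculation assms(2) by (cases "i < M") (auto simp: beta_beyond_length)
  ultimately show "y \<in> beta ps ` {..<M}" by simp
next
  fix y assume "y \<in> beta ps ` {..<M}"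
  then obtain i where "i < M" "y = beta ps i" by auto
  then show "y \<in> {y \<in> range (beta ps). - int M \<le> y}"
    using beta_ge[of i ps] by auto
qed

lemma sum_beta_by_runners:
  assumes partition: "is_partition ps" and t: "0 < t" and len: "length ps \<le> t * K"
    and runner: "\<And>\<rho>. \<rho> < t \<Longrightarrow> {q. int \<rho> + int t * q \<in> range (beta ps)} = {..<L \<rho>}"
  shows "(\<Sum>i<t * K. G (beta ps i)) = (\<Sum>\<rho><t. \<Sum>q = - int K..<L \<rho>. G (int \<rho> + int t * q))"
proof -
  define Y where "Y = {y \<in> range (beta ps). - int (t * K) \<le> y}"
  have Y: "Y = beta ps ` {..<t * K}"
    unfolding Y_def using beta_image_lessThan[OF partition len] by simp
  have runner_Y: "{q. int \<rho> + int t * q \<in> Y} = {- int K..<L \<rho>}" if "\<rho> < t" for \<rho>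
    using runner[OF that] mult_le_add_mult_iff[OF that, of "- int K"] by (auto simp: Y_def)
  have "(\<Sum>i<t * K. G (beta ps i)) = sum G Y"
    unfolding Y using inj_beta[OF partition] by (simp add: sum.reindex inj_on_subset)
  also have "\<dots> = (\<Sum>\<rho><t. \<Sum>q = - int K..<L \<rho>. G (int \<rho> + int t * q))"
    using sum_int_by_residue[of Y t G] t runner_Y by (simp add: Y)
  finally show ?thesis .
qed

lemma sum_cells_content:
  fixes f G :: "int \<Rightarrow> int"
  assumes G: "\<And>y. G y - G (y - 1) = f y" and len: "length ps \<le> M"
  shows "(\<Sum>(i, j)\<in>cells ps. f (int j - int i)) = (\<Sum>i<M. G (beta ps i) - G (beta [] i))"
proof -
  have row: "(\<Sum>j<n. f (int j - int i)) = G (int n - int i - 1) - G (- int i - 1)" for n i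
  proof (induction n)
    case (Suc n)
    then show ?case using G[of "int n - int i"] by simp
  qed simp
  have "(\<Sum>(i, j)\<in>cells ps. f (int j - int i)) = (\<Sum>i<M. \<Sum>j<part ps i. f (int j - int i))"
    unfolding cells_eq_Sigma_part[OF len] by (simp add: sum.Sigma)
  then show ?thesis
    by (simp add: row beta_def part_def)
qed

lemma sum_telescope_cong:
  fixes H g :: "int \<Rightarrow> int"
  assumes "lo \<le> hi" and H_step: "\<And>q. [H (q + 1) - H q = g q] (mod m)"
  shows "[(\<Sum>q = lo..<hi. g q) = H hi - H lo] (mod m)"
  using assms(1)
proof (induction hi rule: int_ge_induct)
  case (step hi)
  have "{lo..<hi + 1} = insert hi {lo..<hi}"
    using step.hyps by auto
  then have "(\<Sum>q = lo..<hi + 1. g q) = g hi + (\<Sum>q = lo..<hi. g q)"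
    by simp
  moreover have "[g hi + (\<Sum>q = lo..<hi. g q) = (H (hi + 1) - H hi) + (H hi - H lo)] (mod m)"
    using step.IH H_step[of hi] by (intro cong_add) (simp_all add: cong_sym)
  ultimately show ?case by simp
qed simp

lemma runner_Nil_eq_lessThan:
  assumes "\<rho> < t"
  shows "{q. int \<rho> + int t * q \<in> range (beta [])} = {..<0}"
proof -
  have "int \<rho> + int t * q < 0 \<longleftrightarrow> q < 0" for q
    using mult_le_add_mult_iff[OF assms, of 0 q] by linarith
  then show ?thesis by (auto simp: range_beta_Nil)
qed

lemma charge_gt:
  assumes core: "is_core t ps" and t: "0 < t" and "\<rho> < t"
  shows "- int (length ps) - 1 < charge t ps \<rho>"
proof -
  have "int \<rho> + int t * (- int (length ps) - 1) < int t * (- int (length ps))"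
    using mult_le_add_mult_iff[OF \<open>\<rho> < t\<close>, of "- int (length ps)" "- int (length ps) - 1"]
    by simp
  also have "\<dots> \<le> - int (length ps)"
    using t mult_right_mono_neg[of 1 "int t" "- int (length ps)"] by simp
  finally have "- int (length ps) - 1 \<in> {..<charge t ps \<rho>}"
    by (auto simp: runner_eq_lessThan_charge[OF core t, symmetric] intro: in_range_beta_below)
  then show ?thesis by simp
qed

text \<open>Row by row, the content sum becomes the sum of G over the beads of ps minus the sum
  over the beads of the empty partition. On runner \<rho> these beads fill the positions below
  \<rho> + t charge t ps \<rho> and below \<rho>, respectively, so both runner sums telescope against H.\<close>

lemma content_sum_cong:
  fixes f G :: "int \<Rightarrow> int" and H :: "nat \<Rightarrow> int \<Rightarrow> int"
  assumes core: "is_core t ps" and t: "0 < t"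
    and G: "\<And>y. G y - G (y - 1) = f y"
    and H: "\<And>\<rho> q. \<rho> < t \<Longrightarrow> [H \<rho> (q + 1) - H \<rho> q = G (int \<rho> + int t * q)] (mod m)"
  shows "[(\<Sum>(i, j)\<in>cells ps. f (int j - int i)) = (\<Sum>\<rho><t. H \<rho> (charge t ps \<rho>) - H \<rho> 0)] (mod m)"
proof -
  have partition: "is_partition ps"
    using core by (simp add: is_core_def)
  define K where "K = length ps + 1"
  have len: "length ps \<le> t * K"
    using t mult_le_mono1[of 1 t K] by (simp add: K_def)
  have runner: "{q. int \<rho> + int t * q \<in> range (beta ps)} = {..<charge t ps \<rho>}" for \<rho>
    by (rule runner_eq_lessThan_charge[OF core t])
  have charge_ge: "- int K \<le> charge t ps \<rho>" if "\<rho> < t" for \<rho>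
    using charge_gt[OF core t that] by (simp add: K_def)
  have "(\<Sum>(i, j)\<in>cells ps. f (int j - int i))
      = (\<Sum>i<t * K. G (beta ps i)) - (\<Sum>i<t * K. G (beta [] i))"
    by (simp add: sum_cells_content[where G = G, OF G len] sum_subtractf)
  also have "\<dots> = (\<Sum>\<rho><t. (\<Sum>q = - int K..<charge t ps \<rho>. G (int \<rho> + int t * q))
      - (\<Sum>q = - int K..<0. G (int \<rho> + int t * q)))"
    using sum_beta_by_runners[OF partition t len runner, of G]
      sum_beta_by_runners[of "[]" t K "\<lambda>_. 0", OF _ t _ runner_Nil_eq_lessThan, of G]
    by (simp add: sum_subtractf is_partition_def)
  finally have sum_eq: "(\<Sum>(i, j)\<in>cells ps. f (int j - int i)) = \<dots>" .
  have "[\<dots> = (\<Sum>\<rho><t. (H \<rho> (charge t ps \<rho>) - H \<rho> (- int K)) - (H \<rho> 0 - H \<rho> (- int K)))] (mod m)"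
    using charge_ge H by (intro cong_sum cong_diff sum_telescope_cong) auto
  then show ?thesis
    unfolding sum_eq by simp
qed

lemma sum_charge_eq_0:
  assumes "is_core t ps" and "0 < t"
  shows "(\<Sum>\<rho><t. charge t ps \<rho>) = 0"
  using content_sum_cong[OF assms, of "\<lambda>_. 1" "\<lambda>_. 0" "\<lambda>_ q. q" 0] by simp

section \<open>The n-vector\<close>

lemma div_diff_pred:
  fixes y t :: int
  assumes t: "0 < t"
  shows "y div t - (y - 1) div t = (if y mod t = 0 then 1 else 0)"
proof (cases "y mod t = 0")
  case True
  then have "t * (y div t) = y"
    using mult_div_mod_eq[of t y] by simp
  then have "y - 1 = t * (y div t - 1) + (t - 1)"
    by (simp add: right_diff_distrib)
  then have "(y - 1) div t = y div t - 1"
    by (rule int_div_pos_eq) (use t in auto)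
  with True show ?thesis by simp
next
  case False
  have eq: "y - 1 = t * (y div t) + (y mod t - 1)"
    by (simp add: algebra_simps)
  have "0 \<le> y mod t" "y mod t < t"
    using t by simp_all
  then have "(y - 1) div t = y div t"
    using False by (intro int_div_pos_eq[OF eq]) auto
  with False show ?thesis by simp
qed

lemma res_count_eq_sum:
  "int (res_count t ps k) = (\<Sum>(i, j)\<in>cells ps. if (int j - int i) mod int t = int k then 1 else 0)"
proof -
  define P where "P x \<longleftrightarrow> (int (snd x) - int (fst x)) mod int t = int k" for x :: "nat \<times> nat"
  have "int (res_count t ps k) = int (card {x \<in> cells ps. P x})"
    unfolding res_count_def P_def by (rule arg_cong[where f = "\<lambda>S. int (card S)"]) auto
  also have "\<dots> = (\<Sum>x\<in>{x \<in> cells ps. P x}. 1)"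
    by simp
  also have "\<dots> = (\<Sum>x\<in>cells ps. if P x then 1 else 0)"
    by (rule sum.inter_filter) simp
  finally show ?thesis
    by (simp add: P_def case_prod_beta)
qed

lemma diff_div_diff_pred:
  assumes "k < t"
  shows "(y - int k) div int t - (y - 1 - int k) div int t = (if y mod int t = int k then 1 else 0)"
proof -
  have "int k mod int t = int k"
    using assms by simp
  then have "(y - int k) mod int t = 0 \<longleftrightarrow> y mod int t = int k"
    by (metis mod_eq_dvd_iff dvd_eq_mod_eq_0)
  then show ?thesis
    using div_diff_pred[of "int t" "y - int k"] assms by (simp add: algebra_simps)
qed

lemma add_mult_diff_div:
  assumes "k < t" and "\<rho> < t"
  shows "(int \<rho> + int t * q - int k) div int t = q - (if \<rho> < k then 1 else 0)"
proof (cases "\<rho> < k")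
  case True
  have "int \<rho> + int t * q - int k = int t * (q - 1) + (int t + int \<rho> - int k)"
    by (simp add: algebra_simps)
  then have "(int \<rho> + int t * q - int k) div int t = q - 1"
    by (rule int_div_pos_eq) (use True assms in auto)
  with True show ?thesis by simp
next
  case False
  have "int \<rho> + int t * q - int k = int t * q + (int \<rho> - int k)"
    by (simp add: algebra_simps)
  then have "(int \<rho> + int t * q - int k) div int t = q"
    by (rule int_div_pos_eq) (use False assms in auto)
  with False show ?thesis by simp
qed

lemma sum_lessThan_if_less:
  fixes k n :: nat
  assumes "k \<le> n"
  shows "(\<Sum>i<n. if i < k then g i else 0) = (\<Sum>i<k. g i)"
proof -
  have "{i \<in> {..<n}. i < k} = {..<k}"
    using assms by auto
  then show ?thesis
    by (simp flip: sum.inter_filter)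
qed

lemma sum_lessThan_Suc_mod_diff:
  fixes L :: "nat \<Rightarrow> int"
  assumes "(\<Sum>\<rho><t. L \<rho>) = 0" and "i < t"
  shows "(\<Sum>\<rho><(i + 1) mod t. L \<rho>) - (\<Sum>\<rho><i. L \<rho>) = L i"
proof (cases "i + 1 < t")
  case False
  then have "t = Suc i"
    using assms(2) by simp
  with assms(1) show ?thesis
    by simp
qed simp

lemma nvec_eq_charge:
  assumes core: "is_core t ps" and t: "0 < t" and i: "i < t"
  shows "nvec t ps i = charge t ps i"
proof -
  define i' where "i' = (i + 1) mod t"
  have i': "i' < t"
    using t by (simp add: i'_def)
  define f :: "int \<Rightarrow> int" where
    "f y = (if y mod int t = int i then 1 else 0) - (if y mod int t = int i' then 1 else 0)" for y
  define G :: "int \<Rightarrow> int"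
    where "G y = (y - int i) div int t - (y - int i') div int t" for y
  define c :: "nat \<Rightarrow> int"
    where "c \<rho> = (if \<rho> < i' then 1 else 0) - (if \<rho> < i then 1 else 0)" for \<rho>
  \<comment> \<open>G is constant on each runner, so the antiderivatives along the runners are linear.\<close>
  have G_step: "G y - G (y - 1) = f y" for y
  proof -
    have "G y - G (y - 1) = ((y - int i) div int t - (y - 1 - int i) div int t)
        - ((y - int i') div int t - (y - 1 - int i') div int t)"
      by (simp add: G_def algebra_simps)
    then show ?thesis
      by (simp only: diff_div_diff_pred[OF i] diff_div_diff_pred[OF i'] f_def)
  qed
  have H_step: "[c \<rho> * (q + 1) - c \<rho> * q = G (int \<rho> + int t * q)] (mod 0)" if "\<rho> < t" for \<rho> q
  proof -
    have "G (int \<rho> + int t * q) = c \<rho>"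
      by (simp add: G_def c_def add_mult_diff_div[OF i that] add_mult_diff_div[OF i' that])
    then show ?thesis
      by (simp add: algebra_simps)
  qed
  have "nvec t ps i = (\<Sum>(a, b)\<in>cells ps. f (int b - int a))"
    by (simp add: nvec_def res_count_eq_sum f_def i'_def case_prod_beta sum_subtractf)
  also have "\<dots> = (\<Sum>\<rho><t. c \<rho> * charge t ps \<rho> - c \<rho> * 0)"
    using content_sum_cong[OF core t G_step H_step] by simp
  also have "\<dots> = (\<Sum>\<rho><t. (if \<rho> < i' then charge t ps \<rho> else 0)
      - (if \<rho> < i then charge t ps \<rho> else 0))"
    by (intro sum.cong) (auto simp: c_def)
  also have "\<dots> = (\<Sum>\<rho><i'. charge t ps \<rho>) - (\<Sum>\<rho><i. charge t ps \<rho>)"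
    using i i' by (simp add: sum_subtractf sum_lessThan_if_less)
  also have "\<dots> = charge t ps i"
    using sum_lessThan_Suc_mod_diff[OF sum_charge_eq_0[OF core t] i] by (simp add: i'_def)
  finally show ?thesis .
qed

section \<open>The signed rank modulo 4\<close>

lemma sum_neg_one_power_lessThan: "(\<Sum>j<n. (-1::int) ^ j) = (if odd n then 1 else 0)"
  by (induction n) auto

lemma num_odd_eq_sum_cells: "int (num_odd ps) = (\<Sum>(i, j)\<in>cells ps. (-1::int) ^ j)"
proof -
  have "(\<Sum>(i, j)\<in>cells ps. (-1::int) ^ j) = (\<Sum>i<length ps. \<Sum>j<part ps i. (-1::int) ^ j)"
    by (simp add: cells_eq_Sigma_part[of ps "length ps"] sum.Sigma)
  also have "\<dots> = (\<Sum>i<length ps. if odd (ps ! i) then 1 else 0)"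
    by (simp add: sum_neg_one_power_lessThan part_def)
  also have "\<dots> = int (card {i \<in> {..<length ps}. odd (ps ! i)})"
    by (simp flip: sum.inter_filter)
  also have "\<dots> = int (num_odd ps)"
    by (simp add: num_odd_def length_filter_conv_card lessThan_def conj_commute)
  finally show ?thesis ..
qed

lemma less_length_filter_greater_iff:
  assumes "is_partition ps"
  shows "k < length (filter (\<lambda>p. j < p) ps) \<longleftrightarrow> j < part ps k"
  using assms
proof (induction ps arbitrary: k)
  case (Cons p ps)
  then have partition: "is_partition ps" and le_p: "\<And>x. x \<in> set ps \<Longrightarrow> x \<le> p"
    by (simp_all add: is_partition_def)
  show ?case
  proof (cases "j < p")
    case True
    then show ?thesis
      using Cons.IH[OF partition] by (cases k) (simp_all add: part_def)
  next
    case False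
    have "filter (\<lambda>p. j < p) ps = []"
      using False le_p by (simp add: filter_empty_conv) (meson le_trans not_less)
    moreover have "part (p # ps) k \<le> p"
      using part_antimono[OF Cons.prems, of 0 k] by (simp add: part_def)
    ultimately show ?thesis
      using False by simp
  qed
qed (simp add: part_def)

lemma cells_conj_part:
  assumes "is_partition ps"
  shows "cells (conj_part ps) = prod.swap ` cells ps"
proof -
  have "(i, j) \<in> cells (conj_part ps) \<longleftrightarrow> i < part ps j" for i j
  proof -
    have "part ps j \<le> (if ps = [] then 0 else hd ps)"
      using part_antimono[OF assms, of 0 j] by (cases ps) (simp_all add: part_def)
    then show ?thesis
      using less_length_filter_greater_iff[OF assms]
      by (auto simp: cells_def conj_part_def)
  qed
  then show ?thesis
    by (auto simp: cells_eq_part[of ps] image_iff)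
qed

lemma srank_eq_sum_cells:
  assumes "is_partition ps"
  shows "srank ps = (\<Sum>(i, j)\<in>cells ps. (-1::int) ^ j - (-1) ^ i)"
proof -
  have "int (num_odd (conj_part ps)) = (\<Sum>(i, j)\<in>cells ps. (-1::int) ^ i)"
    unfolding num_odd_eq_sum_cells cells_conj_part[OF assms]
    by (simp add: sum.reindex case_prod_beta)
  then show ?thesis
    by (simp add: srank_def num_odd_eq_sum_cells sum_subtractf case_prod_beta)
qed

lemma neg_one_power_cong: "[(-1::int) ^ n = 1 + 2 * int n] (mod 4)"
proof (cases "even n")
  case True
  then obtain k where "n = 2 * k" ..
  then show ?thesis by (simp add: cong_def)
next
  case False
  then obtain k where "n = 2 * k + 1" by (rule oddE)
  then show ?thesis by (simp add: cong_def)
qed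

lemma srank_cong_content_sum:
  assumes "is_partition ps"
  shows "[srank ps = (\<Sum>(i, j)\<in>cells ps. 2 * (int j - int i))] (mod 4)"
proof -
  have "[(-1::int) ^ j - (-1) ^ i = 2 * (int j - int i)] (mod 4)" for i j
  proof -
    have "[(-1::int) ^ j - (-1) ^ i = (1 + 2 * int j) - (1 + 2 * int i)] (mod 4)"
      by (intro cong_diff neg_one_power_cong)
    then show ?thesis by (simp add: algebra_simps)
  qed
  then show ?thesis
    unfolding srank_eq_sum_cells[OF assms] by (auto intro: cong_sum)
qed

lemma srank_cong_runner_sum:
  fixes H :: "nat \<Rightarrow> int \<Rightarrow> int"
  assumes core: "is_core t ps" and t: "0 < t"
    and H: "\<And>\<rho> q. \<rho> < t \<Longrightarrow>
      [H \<rho> (q + 1) - H \<rho> q = (int \<rho> + int t * q)\<^sup>2 + (int \<rho> + int t * q)] (mod 4)"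
  shows "[srank ps = (\<Sum>\<rho><t. H \<rho> (nvec t ps \<rho>) - H \<rho> 0)] (mod 4)"
proof -
  have partition: "is_partition ps"
    using core by (simp add: is_core_def)
  have G: "(y\<^sup>2 + y) - ((y - 1)\<^sup>2 + (y - 1)) = 2 * y" for y :: int
    by (simp add: power2_eq_square algebra_simps)
  have "[srank ps = (\<Sum>(i, j)\<in>cells ps. 2 * (int j - int i))] (mod 4)"
    by (rule srank_cong_content_sum[OF partition])
  also have "[(\<Sum>(i, j)\<in>cells ps. 2 * (int j - int i))
      = (\<Sum>\<rho><t. H \<rho> (charge t ps \<rho>) - H \<rho> 0)] (mod 4)"
    by (rule content_sum_cong[OF core t G H])
  also have "(\<Sum>\<rho><t. H \<rho> (charge t ps \<rho>) - H \<rho> 0) = (\<Sum>\<rho><t. H \<rho> (nvec t ps \<rho>) - H \<rho> 0)"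
    by (simp add: nvec_eq_charge[OF core t])
  finally show ?thesis .
qed

lemma sum_nvec_eq_0: "is_core t ps \<Longrightarrow> 0 < t \<Longrightarrow> (\<Sum>i<t. nvec t ps i) = 0"
  by (simp add: nvec_eq_charge sum_charge_eq_0)

section \<open>The four residues of t modulo 4\<close>

lemma twice_pronic_cong_0: "[2 * (x * (x + 1)) = 0] (mod 4)" for x :: int
proof -
  have "even (x * (x + 1))" by simp
  then obtain k where "x * (x + 1) = 2 * k" ..
  then have "2 * (x * (x + 1)) = 4 * k" by simp
  then show ?thesis by (simp add: cong_def)
qed

lemma cong_pronic:
  fixes z u c v e D :: int
  assumes "z = u + 4 * c" and "D = u\<^sup>2 + u + 2 * (v * (v + 1)) + 4 * e"
  shows "[D = z\<^sup>2 + z] (mod 4)"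
proof -
  have "[z = u] (mod 4)"
    using assms(1) by (simp add: cong_def)
  then have "[z\<^sup>2 + z = u\<^sup>2 + u] (mod 4)"
    by (intro cong_add cong_pow)
  moreover have "[D = u\<^sup>2 + u + 0 + 0] (mod 4)"
    unfolding assms(2) by (intro cong_add twice_pronic_cong_0 cong_refl) (simp add: cong_def)
  ultimately show ?thesis
    by (metis add.right_neutral cong_sym cong_trans)
qed

lemma sum_lessThan_add: "(\<Sum>i<n + m. g i) = (\<Sum>i<n. g i) + (\<Sum>i<m. g (n + i))"
  for n m :: nat
  by (induction m) (simp_all add: add_ac)

lemma sum_lessThan_cong_mod_period:
  fixes g :: "nat \<Rightarrow> int"
  assumes block: "\<And>j. [(\<Sum>i<m. g (j + i)) = 0] (mod int m)"
  shows "[(\<Sum>i<n. g i) = (\<Sum>i<n mod m. g i)] (mod int m)"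
proof -
  have "[(\<Sum>i<m * k + r. g i) = (\<Sum>i<r. g i)] (mod int m)" for k r
  proof (induction k)
    case (Suc k)
    have "(\<Sum>i<m * Suc k + r. g i) = (\<Sum>i<m * k + r. g i) + (\<Sum>i<m. g (m * k + r + i))"
      using sum_lessThan_add[of g "m * k + r" m] by (simp add: add_ac)
    also have "[(\<Sum>i<m * k + r. g i) + (\<Sum>i<m. g (m * k + r + i)) = (\<Sum>i<r. g i) + 0] (mod int m)"
      by (intro cong_add Suc.IH block)
    finally show ?case by simp
  qed simp
  from this[of "n div m" "n mod m"] show ?thesis
    by simp
qed

lemma four_consecutive_cubes_cong_0: "[(\<Sum>i<4. (x + int i) ^ 3) = 0] (mod 4)" for x :: int
proof -
  have "(\<Sum>i<4. (x + int i) ^ 3) = 4 * (x ^ 3 + 4 * x\<^sup>2 + 10 * x + 9) + 2 * (x * (x + 1))"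
    by (simp add: numeral_eq_Suc power2_eq_square power3_eq_cube algebra_simps)
  also have "[4 * (x ^ 3 + 4 * x\<^sup>2 + 10 * x + 9) + 2 * (x * (x + 1)) = 0 + 0] (mod 4)"
    by (intro cong_add twice_pronic_cong_0) (simp add: cong_def)
  finally show ?thesis by simp
qed

lemma sum_cubes_cong_0:
  assumes "t mod 4 = 1"
  shows "[(\<Sum>i<t. int i ^ 3) = 0] (mod 4)"
  using sum_lessThan_cong_mod_period[where m = 4 and g = "\<lambda>i. int i ^ 3" and n = t]
    four_consecutive_cubes_cong_0 assms
  by (simp add: add_ac)

lemma sum_one_minus_cubes_cong_0:
  assumes "t mod 4 = 3"
  shows "[(\<Sum>i<t. (1 - int i) ^ 3) = 0] (mod 4)"
proof -
  have "(\<Sum>i<4. (1 - int (j + i)) ^ 3) = - (\<Sum>i<4. (int j - 1 + int i) ^ 3)" for j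
  proof -
    have "(1 - int (j + i)) ^ 3 = - ((int j - 1 + int i) ^ 3)" for i
      by (simp add: power3_eq_cube algebra_simps)
    then show ?thesis by (simp add: sum_negf)
  qed
  then have "[(\<Sum>i<4. (1 - int (j + i)) ^ 3) = 0] (mod int 4)" for j
    using four_consecutive_cubes_cong_0[of "int j - 1"]
      cong_minus_minus_iff[where b = "\<Sum>i<4. (int j - 1 + int i) ^ 3" and c = 0 and a = 4]
    by simp
  then have "[(\<Sum>i<t. (1 - int i) ^ 3) = (\<Sum>i<t mod 4. (1 - int i) ^ 3)] (mod 4)"
    using sum_lessThan_cong_mod_period[where m = 4 and g = "\<lambda>i. (1 - int i) ^ 3" and n = t]
    by simp
  moreover have "(\<Sum>i<3. (1 - int i) ^ 3) = 0"
    by (simp add: numeral_3_eq_3)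
  ultimately show ?thesis
    using assms by simp
qed

lemma int_eq_4_mult_div_plus: "t mod 4 = s \<Longrightarrow> int t = 4 * int (t div 4) + int s"
  by (metis mult_div_mod_eq of_nat_add of_nat_mult of_nat_numeral)

lemma srank_cong_mod4_eq_1:
  assumes core: "is_core t ps" and t: "t mod 4 = 1"
  shows "[srank ps = (\<Sum>i<t. (nvec t ps i + int i) ^ 3)] (mod 4)"
proof -
  have "0 < t" using t by (intro gr0I) simp
  define k where "k = int (t div 4)"
  have t_eq: "int t = 4 * k + 1"
    using int_eq_4_mult_div_plus[OF t] by (simp add: k_def)
  define H where "H \<rho> q = (q + int \<rho>) ^ 3 - q" for \<rho> :: nat and q :: int
  have "[H \<rho> (q + 1) - H \<rho> q = (int \<rho> + int t * q)\<^sup>2 + (int \<rho> + int t * q)] (mod 4)" for \<rho> q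
    by (rule cong_pronic[where u = "q + int \<rho>" and c = "k * q" and v = "q + int \<rho>" and e = 0])
      (simp_all add: H_def t_eq algebra_simps power2_eq_square power3_eq_cube)
  then have "[srank ps = (\<Sum>\<rho><t. H \<rho> (nvec t ps \<rho>) - H \<rho> 0)] (mod 4)"
    by (rule srank_cong_runner_sum[OF core \<open>0 < t\<close>])
  also have "(\<Sum>\<rho><t. H \<rho> (nvec t ps \<rho>) - H \<rho> 0)
      = (\<Sum>i<t. (nvec t ps i + int i) ^ 3) - (\<Sum>i<t. int i ^ 3)"
    using sum_nvec_eq_0[OF core \<open>0 < t\<close>] by (simp add: H_def sum_subtractf)
  also have "[(\<Sum>i<t. (nvec t ps i + int i) ^ 3) - (\<Sum>i<t. int i ^ 3)
      = (\<Sum>i<t. (nvec t ps i + int i) ^ 3) - 0] (mod 4)"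
    by (intro cong_diff cong_refl sum_cubes_cong_0 t)
  finally show ?thesis by simp
qed

lemma srank_cong_mod4_eq_3:
  assumes core: "is_core t ps" and t: "t mod 4 = 3"
  shows "[srank ps = (\<Sum>i<t. (nvec t ps i - int i + 1) ^ 3)] (mod 4)"
proof -
  have "0 < t" using t by (intro gr0I) simp
  define k where "k = int (t div 4)"
  have t_eq: "int t = 4 * k + 3"
    using int_eq_4_mult_div_plus[OF t] by (simp add: k_def)
  define H where "H \<rho> q = (q - int \<rho> + 1) ^ 3 + q" for \<rho> :: nat and q :: int
  have "[H \<rho> (q + 1) - H \<rho> q = (int \<rho> + int t * q)\<^sup>2 + (int \<rho> + int t * q)] (mod 4)" for \<rho> q
    by (rule cong_pronic[where u = "int \<rho> - q" and c = "k * q + q"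
          and v = "q - int \<rho> + 1" and e = "q - int \<rho> + 1"])
      (simp_all add: H_def t_eq algebra_simps power2_eq_square power3_eq_cube)
  then have "[srank ps = (\<Sum>\<rho><t. H \<rho> (nvec t ps \<rho>) - H \<rho> 0)] (mod 4)"
    by (rule srank_cong_runner_sum[OF core \<open>0 < t\<close>])
  also have "(\<Sum>\<rho><t. H \<rho> (nvec t ps \<rho>) - H \<rho> 0)
      = (\<Sum>i<t. (nvec t ps i - int i + 1) ^ 3) - (\<Sum>i<t. (1 - int i) ^ 3)"
    using sum_nvec_eq_0[OF core \<open>0 < t\<close>] by (simp add: H_def sum_subtractf sum.distrib)
  also have "[(\<Sum>i<t. (nvec t ps i - int i + 1) ^ 3) - (\<Sum>i<t. (1 - int i) ^ 3)
      = (\<Sum>i<t. (nvec t ps i - int i + 1) ^ 3) - 0] (mod 4)"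
    by (intro cong_diff cong_refl sum_one_minus_cubes_cong_0 t)
  finally show ?thesis by simp
qed

lemma srank_cong_mod4_eq_0:
  assumes core: "is_core t ps" and "0 < t" and t: "t mod 4 = 0"
  shows "[srank ps = (\<Sum>i<t. (int i ^ 2 + int i) * nvec t ps i)] (mod 4)"
proof -
  define k where "k = int (t div 4)"
  have t_eq: "int t = 4 * k"
    using int_eq_4_mult_div_plus[OF t] by (simp add: k_def)
  define H where "H \<rho> q = (int \<rho> ^ 2 + int \<rho>) * q" for \<rho> :: nat and q :: int
  have "[H \<rho> (q + 1) - H \<rho> q = (int \<rho> + int t * q)\<^sup>2 + (int \<rho> + int t * q)] (mod 4)" for \<rho> q
    by (rule cong_pronic[where u = "int \<rho>" and c = "k * q" and v = 0 and e = 0])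
      (simp_all add: H_def t_eq algebra_simps)
  then have "[srank ps = (\<Sum>\<rho><t. H \<rho> (nvec t ps \<rho>) - H \<rho> 0)] (mod 4)"
    by (rule srank_cong_runner_sum[OF core \<open>0 < t\<close>])
  then show ?thesis by (simp add: H_def)
qed

lemma srank_cong_mod4_eq_2:
  assumes core: "is_core t ps" and t: "t mod 4 = 2"
  shows "[srank ps = (\<Sum>i<t. (nvec t ps i)\<^sup>2 + (int i ^ 2 + int i) * nvec t ps i)] (mod 4)"
proof -
  have "0 < t" using t by (intro gr0I) simp
  define k where "k = int (t div 4)"
  have t_eq: "int t = 4 * k + 2"
    using int_eq_4_mult_div_plus[OF t] by (simp add: k_def)
  define H where "H \<rho> q = q\<^sup>2 + (int \<rho> ^ 2 + int \<rho>) * q - q" for \<rho> :: nat and q :: int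
  have "[H \<rho> (q + 1) - H \<rho> q = (int \<rho> + int t * q)\<^sup>2 + (int \<rho> + int t * q)] (mod 4)" for \<rho> q
    by (rule cong_pronic[where u = "int \<rho> + 2 * q" and c = "k * q" and v = 0
          and e = "- (int \<rho> * q + q\<^sup>2)"])
      (simp_all add: H_def t_eq algebra_simps power2_eq_square)
  then have "[srank ps = (\<Sum>\<rho><t. H \<rho> (nvec t ps \<rho>) - H \<rho> 0)] (mod 4)"
    by (rule srank_cong_runner_sum[OF core \<open>0 < t\<close>])
  also have "(\<Sum>\<rho><t. H \<rho> (nvec t ps \<rho>) - H \<rho> 0)
      = (\<Sum>i<t. (nvec t ps i)\<^sup>2 + (int i ^ 2 + int i) * nvec t ps i)"
    using sum_nvec_eq_0[OF core \<open>0 < t\<close>] by (simp add: H_def sum_subtractf)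
  finally show ?thesis .
qed

theorem theorem4:
  fixes t :: nat and \<kappa> :: "nat list" and a :: int
  assumes "t \<ge> 2" and "is_core t \<kappa>" and "a \<in> {0, 1}"
  shows "(int t mod 4 = (1 + 2 * a) mod 4 \<longrightarrow>
           srank \<kappa> mod 4 =
             (\<Sum>i<t. (nvec t \<kappa> i + (1 - 2 * a) * int i + a) ^ 3) mod 4)
       \<and> (int t mod 4 = (2 * a) mod 4 \<longrightarrow>
           srank \<kappa> mod 4 =
             (\<Sum>i<t. a * (nvec t \<kappa> i)\<^sup>2 + (int i ^ 2 + int i) * nvec t \<kappa> i) mod 4)"
proof -
  have t_mod: "int t mod 4 = int s \<longleftrightarrow> t mod 4 = s" for s
    by (metis of_nat_eq_iff of_nat_mod of_nat_numeral)
  have "0 < t" using assms(1) by simp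
  from assms(3) consider "a = 0" | "a = 1" by blast
  then show ?thesis
  proof cases
    case 1
    then show ?thesis
      using srank_cong_mod4_eq_1[OF assms(2)] srank_cong_mod4_eq_0[OF assms(2) \<open>0 < t\<close>]
        t_mod[of 1] t_mod[of 0]
      by (simp add: cong_def)
  next
    case 2
    then show ?thesis
      using srank_cong_mod4_eq_3[OF assms(2)] srank_cong_mod4_eq_2[OF assms(2)]
        t_mod[of 3] t_mod[of 2]
      by (simp add: cong_def)
  qed
qed

end
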